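(* Let $(X_{i,j})_{i,j\ge1}$ be an infinite double array of identically distributed random variables with mean $0$, variance $1$ and $\mathbf{E}\big(|X_{i,j}|^4(\log|X_{i,j}|)^{2+2\varepsilon}\big)<\infty$ for some $\varepsilon>0$. Let $p=p(n)$ with $p/n\to\rho<\infty$, and let $X_n$ be the upper-left $n\times p$ corner of this array. Let $T_n$ be the $n\times p$ matrix with entries $X_{i,j}1_{|X_{i,j}|<\sqrt n/(\log n)^{(1+\varepsilon)/2}}$. Then $P(X_n\ne T_n\text{ infinitely often})=0$. *)

theory Defs
  imports "HOL-Probability.Probability"
begin

definition trunc_level :: "real \<Rightarrow> nat \<Rightarrow> real" where
  "trunc_level eps n = sqrt (real n) / (ln (real n)) powr ((1 + eps) / 2)"

definition trunc_entry ::
  "(nat \<Rightarrow> nat \<Rightarrow> 'a \<Rightarrow> real) \<Rightarrow> real \<Rightarrow> nat \<Rightarrow> nat \<Rightarrow> nat \<Rightarrow> 'a \<Rightarrow> real" where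
  "trunc_entry X eps n i j \<omega> =
     (if \<bar>X i j \<omega>\<bar> < trunc_level eps n then X i j \<omega> else 0)"

definition corner_differs ::
  "(nat \<Rightarrow> nat \<Rightarrow> 'a \<Rightarrow> real) \<Rightarrow> real \<Rightarrow> (nat \<Rightarrow> nat) \<Rightarrow> nat \<Rightarrow> 'a \<Rightarrow> bool" where
  "corner_differs X eps p n \<omega> =
     (\<exists>i\<in>{1..n}. \<exists>j\<in>{1..p n}. X i j \<omega> \<noteq> trunc_entry X eps n i j \<omega>)"

end

theory Submission
  imports Defs "HOL-Real_Asymp.Real_Asymp"
begin

(*
  With p(n) \<le> C n, the n \<times> p(n) corner lies in the box [1,n] \<times> [1,Cn], and the shell
  box(m) - box(m-1) has at most 2Cm entries. Write L(m) = \<surd>m / (ln m)^((1+\<epsilon>)/2).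
  The probability that some entry of shell m reaches L(m) is at most 2Cm P(|X| \<ge> L(m)), and
  \<Sum>\<^sub>m m P(|X| \<ge> L(m)) = E \<Sum>{m : L(m) \<le> |X|} m is finite: L(m) \<le> |x| forces
  m \<le> 4^(1+\<epsilon>) x\<^sup>2 (ln|x|)^(1+\<epsilon>), so the inner sum is O(x\<^sup>4 (ln|x|)^(2+2\<epsilon>)).
  By Borel-Cantelli almost surely only finitely many shells contain an exceedance, and since L is
  eventually increasing and unbounded, all entries of the n-th corner eventually stay below L(n).
*)

lemma half_minus_ln_mono:
  fixes a s t :: real
  assumes "0 < s" "2 * a \<le> s" "s \<le> t"
  shows "s / 2 - a * ln s \<le> t / 2 - a * ln t"
proof (rule DERIV_nonneg_imp_nondecreasing[OF \<open>s \<le> t\<close>])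
  fix u assume "s \<le> u" "u \<le> t"
  then have "0 < u" "a / u \<le> 1 / 2" using assms by (auto simp: field_simps)
  then show "\<exists>d. ((\<lambda>u. u / 2 - a * ln u) has_real_derivative d) (at u) \<and> 0 \<le> d"
    by (intro exI[of _ "1 / 2 - a / u"]) (auto intro!: derivative_eq_intros simp: field_simps)
qed

lemma trunc_level_eq_exp:
  assumes "1 < real n"
  shows "trunc_level eps n = exp (ln (real n) / 2 - (1 + eps) / 2 * ln (ln (real n)))"
  using assms by (simp add: trunc_level_def powr_def exp_diff sqrt_def root_powr_inverse)

lemma trunc_level_mono:
  assumes "-1 < eps" "exp (1 + eps) \<le> real m" "m \<le> n"
  shows "trunc_level eps m \<le> trunc_level eps n"
proof -
  have "1 < exp (1 + eps)" using assms(1) by simp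
  then have m: "1 < real m" using assms(2) by linarith
  have "1 + eps \<le> ln (real m)" using assms(2) m by (simp add: ln_ge_iff)
  moreover have "ln (real m) \<le> ln (real n)" using m assms(3) by simp
  ultimately have "ln (real m) / 2 - (1 + eps) / 2 * ln (ln (real m))
      \<le> ln (real n) / 2 - (1 + eps) / 2 * ln (ln (real n))"
    using m by (intro half_minus_ln_mono) auto
  then show ?thesis using m assms(3) by (simp add: trunc_level_eq_exp)
qed

lemma trunc_level_at_top:
  assumes "-1 < eps"
  shows "filterlim (trunc_level eps) at_top sequentially"
  using assms unfolding trunc_level_def by real_asymp

lemma eventually_ln_powr_le_root4:
  "eventually (\<lambda>n. ln (real n) powr a \<le> real n powr (1 / 4)) sequentially"
  by real_asymp

lemma real_le_of_trunc_level_le: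
  fixes x :: real
  assumes "-1 < eps" "2 \<le> m"
    and log_le_root: "ln (real m) powr ((1 + eps) / 2) \<le> real m powr (1 / 4)"
    and level_le: "trunc_level eps m \<le> \<bar>x\<bar>"
  shows "real m \<le> 4 powr (1 + eps) * x\<^sup>2 * \<bar>ln \<bar>x\<bar>\<bar> powr (1 + eps)"
proof -
  \<comment> \<open>The log factor is at most m^(1/4), so |x| \<ge> m^(1/4); hence ln m \<le> 4 ln |x|,
    which is fed back into \<surd>m \<le> |x| (ln m)^((1+eps)/2).\<close>
  define a where "a = (1 + eps) / 2"
  define P where "P = ln (real m) powr a"
  have m: "2 \<le> real m" using assms(2) by simp
  have a: "0 \<le> a" using assms(1) by (simp add: a_def)
  have P: "0 < P" using m by (simp add: P_def)
  have sqrt_le: "sqrt (real m) \<le> \<bar>x\<bar> * P"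
    using level_le P by (simp add: trunc_level_def P_def a_def divide_le_eq mult.commute)
  have root: "0 < real m powr (1 / 4)" using m by simp
  have sqrt_eq: "sqrt (real m) = real m powr (1 / 4) * real m powr (1 / 4)"
    using m by (simp add: powr_add[symmetric] powr_half_sqrt[symmetric])
  have "sqrt (real m) \<le> \<bar>x\<bar> * real m powr (1 / 4)"
    using sqrt_le log_le_root by (smt (verit) P_def a_def abs_ge_zero mult_left_mono)
  then have "real m powr (1 / 4) \<le> \<bar>x\<bar>" using root unfolding sqrt_eq by simp
  then have "(real m powr (1 / 4)) ^ 4 \<le> \<bar>x\<bar> ^ 4" using root by (intro power_mono) auto
  then have "real m \<le> \<bar>x\<bar> ^ 4" using m by (simp add: powr_realpow[symmetric] powr_powr)
  then have "ln (real m) \<le> ln (\<bar>x\<bar> ^ 4)" using m by (intro ln_mono) auto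
  also have "\<dots> = 4 * ln \<bar>x\<bar>" using m \<open>real m \<le> \<bar>x\<bar> ^ 4\<close> by (subst ln_realpow) auto
  finally have "ln (real m) \<le> 4 * ln \<bar>x\<bar>" .
  then have "P \<le> (4 * \<bar>ln \<bar>x\<bar>\<bar>) powr a"
    unfolding P_def using m a by (intro powr_mono2) auto
  also have "\<dots> = 4 powr a * \<bar>ln \<bar>x\<bar>\<bar> powr a" by (simp add: powr_mult)
  finally have "sqrt (real m) \<le> \<bar>x\<bar> * (4 powr a * \<bar>ln \<bar>x\<bar>\<bar> powr a)"
    using sqrt_le by (meson abs_ge_zero mult_left_mono order_trans)
  then have "real m \<le> (\<bar>x\<bar> * (4 powr a * \<bar>ln \<bar>x\<bar>\<bar> powr a))\<^sup>2"
    using power_mono[of "sqrt (real m)" _ 2] m by simp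
  also have "\<dots> = x\<^sup>2 * (4 powr a * 4 powr a) * (\<bar>ln \<bar>x\<bar>\<bar> powr a * \<bar>ln \<bar>x\<bar>\<bar> powr a)"
    by (simp add: power2_eq_square algebra_simps)
  also have "\<dots> = 4 powr (1 + eps) * x\<^sup>2 * \<bar>ln \<bar>x\<bar>\<bar> powr (1 + eps)"
    by (simp only: powr_add[symmetric]) (simp add: a_def mult_ac)
  finally show ?thesis .
qed

lemma sum_le_square_of_bound:
  assumes "finite S" "0 \<notin> S" and le_B: "\<And>m. m \<in> S \<Longrightarrow> real m \<le> B"
  shows "(\<Sum>m\<in>S. real m) \<le> B\<^sup>2"
proof (cases "S = {}")
  case False
  then obtain m0 where "m0 \<in> S" by blast
  then have B: "1 \<le> B" using assms(2) le_B[of m0] by (cases m0) auto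
  have "S \<subseteq> {1..nat \<lfloor>B\<rfloor>}"
  proof
    fix m assume "m \<in> S"
    then show "m \<in> {1..nat \<lfloor>B\<rfloor>}" using assms(2) le_B[of m] by (cases m) (auto simp: le_nat_floor)
  qed
  then have "card S \<le> nat \<lfloor>B\<rfloor>" using card_mono[of "{1..nat \<lfloor>B\<rfloor>}" S] by simp
  then have "real (card S) \<le> of_int \<lfloor>B\<rfloor>" using B by linarith
  also have "\<dots> \<le> B" by simp
  finally have card: "real (card S) \<le> B" .
  have "(\<Sum>m\<in>S. real m) \<le> real (card S) * B" using sum_bounded_above[of S real B] le_B by simp
  also have "\<dots> \<le> B\<^sup>2" using card B by (simp add: power2_eq_square mult_right_mono)
  finally show ?thesis .
qed simp

lemma sum_le_moment_of_trunc_level_le: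
  fixes x :: real
  assumes "-1 < eps" "2 \<le> N"
    and log_le_root: "\<And>m. N \<le> m \<Longrightarrow> ln (real m) powr ((1 + eps) / 2) \<le> real m powr (1 / 4)"
  shows "(\<Sum>m\<in>{m\<in>{N..n}. trunc_level eps m \<le> \<bar>x\<bar>}. real m)
           \<le> 16 powr (1 + eps) * (\<bar>x\<bar> ^ 4 * \<bar>ln \<bar>x\<bar>\<bar> powr (2 + 2 * eps))"
proof -
  define B where "B = 4 powr (1 + eps) * x\<^sup>2 * \<bar>ln \<bar>x\<bar>\<bar> powr (1 + eps)"
  have "(\<Sum>m\<in>{m\<in>{N..n}. trunc_level eps m \<le> \<bar>x\<bar>}. real m) \<le> B\<^sup>2"
    using assms unfolding B_def by (intro sum_le_square_of_bound real_le_of_trunc_level_le) auto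
  also have "B\<^sup>2 = (4 powr (1 + eps) * 4 powr (1 + eps)) * (x\<^sup>2)\<^sup>2
                    * (\<bar>ln \<bar>x\<bar>\<bar> powr (1 + eps) * \<bar>ln \<bar>x\<bar>\<bar> powr (1 + eps))"
    by (simp add: B_def power2_eq_square mult_ac)
  also have "\<dots> = 16 powr (1 + eps) * (\<bar>x\<bar> ^ 4 * \<bar>ln \<bar>x\<bar>\<bar> powr (2 + 2 * eps))"
  proof -
    have "4 powr (1 + eps) * 4 powr (1 + eps) = (16::real) powr (1 + eps)"
      by (simp add: powr_mult[symmetric])
    moreover have "(x\<^sup>2)\<^sup>2 = \<bar>x\<bar> ^ 4" by (simp add: power_even_abs flip: power_mult)
    moreover have "\<bar>ln \<bar>x\<bar>\<bar> powr (1 + eps) * \<bar>ln \<bar>x\<bar>\<bar> powr (1 + eps) = \<bar>ln \<bar>x\<bar>\<bar> powr (2 + 2 * eps)"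
      by (subst powr_add[symmetric]) (rule arg_cong[where f = "\<lambda>e. \<bar>ln \<bar>x\<bar>\<bar> powr e"], simp)
    ultimately show ?thesis by simp
  qed
  finally show ?thesis .
qed

lemma summable_weighted_measure:
  assumes "finite_measure M" and sets: "\<And>m. A m \<in> sets M" and "\<And>m. 0 \<le> w m"
    and "integrable M F"
    and bound: "\<And>n \<omega>. \<omega> \<in> space M \<Longrightarrow> (\<Sum>m\<le>n. w m * indicator (A m) \<omega>) \<le> F \<omega>"
  shows "summable (\<lambda>m. w m * measure M (A m))"
proof (rule bounded_imp_summable)
  interpret finite_measure M by fact
  fix n
  have indicator_integrable: "integrable M (indicator (A m) :: 'a \<Rightarrow> real)" for m
    using sets by (intro integrable_real_indicator) (simp_all add: less_top[symmetric])
  have "(\<integral>\<omega>. (\<Sum>m\<le>n. w m * indicator (A m) \<omega>) \<partial>M) = (\<Sum>m\<le>n. w m * measure M (A m))"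
    using sets indicator_integrable by (subst Bochner_Integration.integral_sum) auto
  then have "(\<Sum>m\<le>n. w m * measure M (A m)) = (\<integral>\<omega>. (\<Sum>m\<le>n. w m * indicator (A m) \<omega>) \<partial>M)"
    by simp
  also have "\<dots> \<le> integral\<^sup>L M F"
  proof (rule integral_mono)
    show "integrable M (\<lambda>\<omega>. \<Sum>m\<le>n. w m * indicator (A m) \<omega>)"
      by (rule Bochner_Integration.integrable_sum) (simp add: indicator_integrable)
  qed (use assms in auto)
  finally show "(\<Sum>m\<le>n. w m * measure M (A m)) \<le> integral\<^sup>L M F" .
qed (simp add: assms)

lemma summable_weighted_tail_trunc_level:
  fixes X :: "'a \<Rightarrow> real"
  assumes "finite_measure M" "X \<in> borel_measurable M" "-1 < eps"
    and moment: "integrable M (\<lambda>\<omega>. \<bar>X \<omega>\<bar> ^ 4 * \<bar>ln \<bar>X \<omega>\<bar>\<bar> powr (2 + 2 * eps))"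
  shows "summable (\<lambda>m. real m * measure M {\<omega> \<in> space M. trunc_level eps m \<le> \<bar>X \<omega>\<bar>})"
proof -
  obtain N where N: "2 \<le> N" "\<And>m. N \<le> m \<Longrightarrow> ln (real m) powr ((1 + eps) / 2) \<le> real m powr (1 / 4)"
    using eventually_conj[OF eventually_ge_at_top[of 2] eventually_ln_powr_le_root4]
    unfolding eventually_sequentially by blast
  define A where "A m = {\<omega> \<in> space M. trunc_level eps m \<le> \<bar>X \<omega>\<bar>}" for m
  define w where "w m = (if N \<le> m then real m else 0)" for m
  have "summable (\<lambda>m. w m * measure M (A m))"
  proof (rule summable_weighted_measure[OF assms(1)])
    show "integrable M (\<lambda>\<omega>. 16 powr (1 + eps) * (\<bar>X \<omega>\<bar> ^ 4 * \<bar>ln \<bar>X \<omega>\<bar>\<bar> powr (2 + 2 * eps)))"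
      using moment by (rule integrable_mult_right)
    fix n \<omega> assume "\<omega> \<in> space M"
    then have "(\<Sum>m\<le>n. w m * indicator (A m) \<omega>)
        = (\<Sum>m\<in>{N..n}. if trunc_level eps m \<le> \<bar>X \<omega>\<bar> then real m else 0)"
      by (intro sum.mono_neutral_cong_right) (auto simp: w_def A_def indicator_def)
    also have "\<dots> = (\<Sum>m\<in>{m\<in>{N..n}. trunc_level eps m \<le> \<bar>X \<omega>\<bar>}. real m)"
      by (rule sum.inter_filter[symmetric]) simp
    also have "\<dots> \<le> 16 powr (1 + eps) * (\<bar>X \<omega>\<bar> ^ 4 * \<bar>ln \<bar>X \<omega>\<bar>\<bar> powr (2 + 2 * eps))"
      by (rule sum_le_moment_of_trunc_level_le[OF assms(3) N])
    finally show "(\<Sum>m\<le>n. w m * indicator (A m) \<omega>)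
        \<le> 16 powr (1 + eps) * (\<bar>X \<omega>\<bar> ^ 4 * \<bar>ln \<bar>X \<omega>\<bar>\<bar> powr (2 + 2 * eps))" .
  qed (use assms(2) in \<open>auto simp: w_def A_def\<close>)
  moreover have "\<forall>\<^sub>F m in sequentially. w m * measure M (A m) = real m * measure M (A m)"
    using eventually_ge_at_top[of N] by eventually_elim (simp add: w_def)
  ultimately show ?thesis using summable_cong[of "\<lambda>m. w m * measure M (A m)"] by (simp add: A_def)
qed

lemma measure_vimage_eq_if_distr_eq:
  assumes "X \<in> borel_measurable M" "Y \<in> borel_measurable M"
    and "distr M borel X = distr M borel Y" and "B \<in> sets borel"
  shows "measure M (X -` B \<inter> space M) = measure M (Y -` B \<inter> space M)"
  using measure_distr[OF assms(1,4)] measure_distr[OF assms(2,4)] assms(3) by simp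

lemma incseq_exists_Diff_pred:
  assumes "incseq A" "x \<in> A n" "x \<notin> A k"
  shows "\<exists>m. k < m \<and> m \<le> n \<and> x \<in> A m - A (m - 1)"
  using assms(2)
proof (induction n)
  case 0
  then show ?case using assms(1,3) by (auto simp: incseq_def)
next
  case (Suc n)
  show ?case
  proof (cases "x \<in> A n")
    case True
    then show ?thesis using Suc.IH le_SucI by blast
  next
    case False
    have "k < Suc n" using Suc.prems assms(1,3) by (metis incseq_def not_less subsetD)
    then show ?thesis using False Suc.prems by auto
  qed
qed

definition corner_box :: "nat \<Rightarrow> nat \<Rightarrow> (nat \<times> nat) set" where
  "corner_box C m = {1..m} \<times> {1..C * m}"

lemma incseq_corner_box: "incseq (corner_box C)"
  unfolding incseq_def corner_box_def by (auto intro: order_trans[OF _ mult_le_mono2])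

lemma card_corner_box_Diff_pred: "card (corner_box C m - corner_box C (m - 1)) \<le> 2 * C * m"
proof -
  have "corner_box C (m - 1) \<subseteq> corner_box C m"
    using incseq_corner_box by (simp add: incseq_def)
  then have "card (corner_box C m - corner_box C (m - 1)) = m * (C * m) - (m - 1) * (C * (m - 1))"
    by (simp add: card_Diff_subset corner_box_def card_cartesian_product)
  also have "\<dots> \<le> 2 * C * m" by (cases m) (simp_all add: algebra_simps)
  finally show ?thesis .
qed

lemma AE_eventually_corner_shells_below:
  fixes X :: "nat \<Rightarrow> nat \<Rightarrow> 'a \<Rightarrow> real" and L :: "nat \<Rightarrow> real"
  assumes "prob_space M"
    and rv: "\<And>i j. i \<ge> 1 \<Longrightarrow> j \<ge> 1 \<Longrightarrow> X i j \<in> borel_measurable M"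
    and ident: "\<And>i j. i \<ge> 1 \<Longrightarrow> j \<ge> 1 \<Longrightarrow> distr M borel (X i j) = distr M borel (X 1 1)"
    and tail: "summable (\<lambda>m. real m * measure M {\<omega> \<in> space M. L m \<le> \<bar>X 1 1 \<omega>\<bar>})"
  shows "AE \<omega> in M. \<forall>\<^sub>F m in sequentially.
           \<forall>(i, j) \<in> corner_box C m - corner_box C (m - 1). \<bar>X i j \<omega>\<bar> < L m"
proof -
  interpret prob_space M by fact
  define E where "E m i j = {\<omega> \<in> space M. L m \<le> \<bar>X i j \<omega>\<bar>}" for m i j
  define G where "G m = measure M (E m 1 1)" for m
  define B where "B m = (\<Union>(i, j) \<in> corner_box C m - corner_box C (m - 1). E m i j)" for m
  have entry: "1 \<le> i" "1 \<le> j" if "(i, j) \<in> corner_box C m - corner_box C (m - 1)" for i j m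
    using that by (auto simp: corner_box_def)
  have E_sets: "E m i j \<in> sets M" if "1 \<le> i" "1 \<le> j" for m i j
    using rv[OF that] unfolding E_def by measurable
  have E_measure: "measure M (E m i j) = G m" if "1 \<le> i" "1 \<le> j" for m i j
  proof -
    have "{y. L m \<le> \<bar>y\<bar>} \<in> sets borel" by measurable
    from measure_vimage_eq_if_distr_eq[OF rv[OF that] rv[of 1 1] ident[OF that] this]
    have "measure M (X i j -` {y. L m \<le> \<bar>y\<bar>} \<inter> space M) = measure M (X 1 1 -` {y. L m \<le> \<bar>y\<bar>} \<inter> space M)"
      by simp
    moreover have "X i j -` {y. L m \<le> \<bar>y\<bar>} \<inter> space M = E m i j"
      and "X 1 1 -` {y. L m \<le> \<bar>y\<bar>} \<inter> space M = E m 1 1"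
      by (auto simp: E_def)
    ultimately show ?thesis by (simp only: G_def)
  qed
  have B_sets: "B m \<in> sets M" for m
    unfolding B_def using entry E_sets
    by (intro sets.finite_UN) (auto simp: corner_box_def)
  have B_measure: "measure M (B m) \<le> 2 * real C * (real m * G m)" for m
  proof -
    have "measure M (B m)
        \<le> (\<Sum>ij \<in> corner_box C m - corner_box C (m - 1). measure M (case ij of (i, j) \<Rightarrow> E m i j))"
      unfolding B_def using entry E_sets
      by (intro finite_measure_subadditive_finite) (auto simp: corner_box_def)
    also have "\<dots> = (\<Sum>ij \<in> corner_box C m - corner_box C (m - 1). G m)"
      using entry E_measure by (intro sum.cong) (auto split: prod.splits)
    also have "\<dots> = real (card (corner_box C m - corner_box C (m - 1))) * G m"
      by simp
    also have "\<dots> \<le> real (2 * C * m) * G m"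
      using card_corner_box_Diff_pred[of C m] by (intro mult_right_mono of_nat_mono) (auto simp: G_def)
    finally show ?thesis by (simp add: mult_ac)
  qed
  have "summable (\<lambda>m. 2 * real C * (real m * G m))"
    using tail unfolding G_def E_def by (rule summable_mult)
  then have "summable (\<lambda>m. measure M (B m))"
    by (rule summable_comparison_test'[where N = 0])
      (simp only: real_norm_def abs_of_nonneg[OF measure_nonneg] B_measure)
  then have "AE \<omega> in M. \<forall>\<^sub>F m in sequentially. \<omega> \<in> space M - B m"
    using B_sets by (intro borel_cantelli_AE1) (auto simp: less_top[symmetric])
  then show ?thesis
  proof (rule eventually_mono)
    fix \<omega> assume "\<forall>\<^sub>F m in sequentially. \<omega> \<in> space M - B m"
    then show "\<forall>\<^sub>F m in sequentially.
        \<forall>(i, j) \<in> corner_box C m - corner_box C (m - 1). \<bar>X i j \<omega>\<bar> < L m"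
    proof (rule eventually_mono)
      fix m assume \<omega>: "\<omega> \<in> space M - B m"
      have "\<bar>X i j \<omega>\<bar> < L m" if "(i, j) \<in> corner_box C m - corner_box C (m - 1)" for i j
      proof -
        have "\<omega> \<notin> E m i j" using \<omega> that unfolding B_def by blast
        then show ?thesis using \<omega> by (simp add: E_def not_le)
      qed
      then show "\<forall>(i, j) \<in> corner_box C m - corner_box C (m - 1). \<bar>X i j \<omega>\<bar> < L m" by auto
    qed
  qed
qed

lemma eventually_corner_below_level:
  fixes x :: "nat \<Rightarrow> nat \<Rightarrow> real" and L :: "nat \<Rightarrow> real"
  assumes L_mono: "\<And>m n. N \<le> m \<Longrightarrow> m \<le> n \<Longrightarrow> L m \<le> L n"
    and L_at_top: "filterlim L at_top sequentially"
    and p_le: "\<forall>\<^sub>F n in sequentially. p n \<le> C * n"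
    and shells: "\<forall>\<^sub>F m in sequentially. \<forall>(i, j) \<in> corner_box C m - corner_box C (m - 1). \<bar>x i j\<bar> < L m"
  shows "\<forall>\<^sub>F n in sequentially. \<forall>i \<in> {1..n}. \<forall>j \<in> {1..p n}. \<bar>x i j\<bar> < L n"
proof -
  obtain K where "N \<le> K"
    and K: "\<And>m. K \<le> m \<Longrightarrow> \<forall>(i, j) \<in> corner_box C m - corner_box C (m - 1). \<bar>x i j\<bar> < L m"
    using eventually_conj[OF eventually_ge_at_top[of N] shells] unfolding eventually_sequentially by blast
  have "bdd_above ((\<lambda>(i, j). \<bar>x i j\<bar>) ` corner_box C K)"
    by (intro bdd_above_finite) (simp add: corner_box_def)
  then obtain R where R: "\<forall>ij \<in> corner_box C K. (case ij of (i, j) \<Rightarrow> \<bar>x i j\<bar>) \<le> R"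
    unfolding bdd_above_def by auto
  have "\<forall>\<^sub>F n in sequentially. R < L n"
    using L_at_top by (simp add: filterlim_at_top_dense)
  then show ?thesis using p_le eventually_ge_at_top[of K]
  proof eventually_elim
    case (elim n)
    show ?case
    proof (intro ballI)
      fix i j assume "i \<in> {1..n}" "j \<in> {1..p n}"
      then have ij: "(i, j) \<in> corner_box C n" using elim by (auto simp: corner_box_def)
      show "\<bar>x i j\<bar> < L n"
      proof (cases "(i, j) \<in> corner_box C K")
        case True
        then show ?thesis using R elim by fastforce
      next
        case False
        then obtain m where "K < m" "m \<le> n" "(i, j) \<in> corner_box C m - corner_box C (m - 1)"
          using incseq_exists_Diff_pred[OF incseq_corner_box ij] by blast
        then have "\<bar>x i j\<bar> < L m" using K[of m] by auto
        also have "L m \<le> L n" using L_mono \<open>N \<le> K\<close> \<open>K < m\<close> \<open>m \<le> n\<close> by simp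
        finally show ?thesis .
      qed
    qed
  qed
qed

lemma eventually_le_mult_if_ratio_tendsto:
  assumes "(\<lambda>n. real (p n) / real n) \<longlonglongrightarrow> \<rho>"
  shows "\<exists>C. \<forall>\<^sub>F n in sequentially. p n \<le> C * n"
proof (intro exI)
  have "\<forall>\<^sub>F n in sequentially. real (p n) / real n < \<rho> + 1"
    using assms by (rule order_tendstoD) simp
  then show "\<forall>\<^sub>F n in sequentially. p n \<le> (nat \<lceil>\<rho>\<rceil> + 1) * n"
    using eventually_gt_at_top[of 0]
  proof eventually_elim
    case (elim n)
    then have "real (p n) < (\<rho> + 1) * real n" by (simp add: divide_less_eq)
    also have "\<dots> \<le> real (nat \<lceil>\<rho>\<rceil> + 1) * real n"
      using elim by (intro mult_right_mono) (linarith, simp)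
    finally show ?case by (metis less_imp_le of_nat_less_iff of_nat_mult)
  qed
qed

lemma sets_corner_differs_INFM:
  assumes rv: "\<And>i j. i \<ge> 1 \<Longrightarrow> j \<ge> 1 \<Longrightarrow> X i j \<in> borel_measurable M"
  shows "{\<omega> \<in> space M. \<exists>\<^sub>\<infinity>n. corner_differs X eps p n \<omega>} \<in> sets M"
proof -
  have [measurable]: "X i j \<in> borel_measurable M" if "i \<in> {1..n}" "j \<in> {1..m}" for i j n m
    using rv that by auto
  show ?thesis unfolding INFM_nat corner_differs_def trunc_entry_def by measurable
qed

lemma measure_INFM_eq_0_if_AE_eventually_not:
  assumes "{\<omega> \<in> space M. \<exists>\<^sub>\<infinity>n. P n \<omega>} \<in> sets M"
    and "AE \<omega> in M. \<forall>\<^sub>F n in sequentially. \<not> P n \<omega>"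
  shows "measure M {\<omega> \<in> space M. \<exists>\<^sub>\<infinity>n. P n \<omega>} = 0"
proof -
  have "{\<omega> \<in> space M. \<not> (\<forall>\<^sub>F n in sequentially. \<not> P n \<omega>)} = {\<omega> \<in> space M. \<exists>\<^sub>\<infinity>n. P n \<omega>}"
    by (simp add: not_eventually cofinite_eq_sequentially)
  then have "emeasure M {\<omega> \<in> space M. \<exists>\<^sub>\<infinity>n. P n \<omega>} = 0"
    using AE_iff_measurable[OF assms(1)] assms(2) by simp
  then show ?thesis by (simp add: measure_def)
qed

theorem lemma2:
  fixes M :: "'a measure"
    and X :: "nat \<Rightarrow> nat \<Rightarrow> 'a \<Rightarrow> real"
    and p :: "nat \<Rightarrow> nat"
    and eps \<rho> :: real
  assumes "prob_space M"
    and rv: "\<And>i j. i \<ge> 1 \<Longrightarrow> j \<ge> 1 \<Longrightarrow> X i j \<in> borel_measurable M"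
    and ident: "\<And>i j. i \<ge> 1 \<Longrightarrow> j \<ge> 1 \<Longrightarrow>
                   distr M borel (X i j) = distr M borel (X 1 1)"
    and int1: "integrable M (X 1 1)"
    and mean: "prob_space.expectation M (X 1 1) = 0"
    and int2: "integrable M (\<lambda>\<omega>. (X 1 1 \<omega>)\<^sup>2)"
    and var: "prob_space.variance M (X 1 1) = 1"
    and eps: "eps > 0"
    and moment: "integrable M (\<lambda>\<omega>. \<bar>X 1 1 \<omega>\<bar> ^ 4 * \<bar>ln \<bar>X 1 1 \<omega>\<bar>\<bar> powr (2 + 2 * eps))"
    and ratio: "(\<lambda>n. real (p n) / real n) \<longlonglongrightarrow> \<rho>"
  shows "{\<omega> \<in> space M. \<exists>\<^sub>\<infinity>n. corner_differs X eps p n \<omega>} \<in> sets M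
       \<and> measure M {\<omega> \<in> space M. \<exists>\<^sub>\<infinity>n. corner_differs X eps p n \<omega>} = 0"
proof -
  interpret prob_space M by fact
  have eps': "-1 < eps" using eps by simp
  obtain C where p_le: "\<forall>\<^sub>F n in sequentially. p n \<le> C * n"
    using eventually_le_mult_if_ratio_tendsto[OF ratio] by blast
  have level_mono: "trunc_level eps m \<le> trunc_level eps n" if "nat \<lceil>exp (1 + eps)\<rceil> \<le> m" "m \<le> n" for m n
    using that eps' by (intro trunc_level_mono) (auto simp: nat_le_iff ceiling_le_iff)
  have tail: "summable (\<lambda>m. real m * measure M {\<omega> \<in> space M. trunc_level eps m \<le> \<bar>X 1 1 \<omega>\<bar>})"
    using rv by (intro summable_weighted_tail_trunc_level[OF finite_measure_axioms _ eps' moment]) auto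
  have "AE \<omega> in M. \<forall>\<^sub>F m in sequentially.
          \<forall>(i, j) \<in> corner_box C m - corner_box C (m - 1). \<bar>X i j \<omega>\<bar> < trunc_level eps m"
    by (rule AE_eventually_corner_shells_below[where X = X, OF \<open>prob_space M\<close>]) (fact rv, fact ident, fact tail)
  then have good_AE: "AE \<omega> in M. \<forall>\<^sub>F n in sequentially. \<not> corner_differs X eps p n \<omega>"
  proof (rule eventually_mono)
    fix \<omega> assume "\<forall>\<^sub>F m in sequentially.
          \<forall>(i, j) \<in> corner_box C m - corner_box C (m - 1). \<bar>X i j \<omega>\<bar> < trunc_level eps m"
    from eventually_corner_below_level[where N = "nat \<lceil>exp (1 + eps)\<rceil>", OF level_mono trunc_level_at_top[OF eps'] p_le this]
    show "\<forall>\<^sub>F n in sequentially. \<not> corner_differs X eps p n \<omega>"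
      by (rule eventually_mono) (auto simp: corner_differs_def trunc_entry_def)
  qed
  have "{\<omega> \<in> space M. \<exists>\<^sub>\<infinity>n. corner_differs X eps p n \<omega>} \<in> sets M"
    using rv by (rule sets_corner_differs_INFM)
  then show ?thesis using measure_INFM_eq_0_if_AE_eventually_not[OF _ good_AE] by simp
qed

end
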